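(* For every command $c$ and store $\sigma$ of the While-language: $(c,\sigma)\to^\infty$ if and only if $(c,\sigma)\Rightarrow^\infty$.
   Context: While-language syntax: variables $x$ range over a countably infinite set $\mathit{Var}$; $n$ ranges over natural numbers; values are $v ::= \mathsf{null}\mid n$ ($\mathsf{null}$ distinct from every natural number); expressions are $e ::= v\mid x\mid e_1\oplus e_2$ with $\oplus\in\{+,-,*\}$, where $\oplus(n_1,n_2)$ is the result of the operation on naturals; commands are $c ::= \mathsf{skip}\mid\mathsf{alloc}\ x\mid x:=e\mid c_1;c_2\mid \mathsf{if}\ e\ c_1\ c_2\mid\mathsf{while}\ e\ c$. A store $\sigma$ is a finite partial map from $\mathit{Var}$ to values, with domain $\mathrm{dom}(\sigma)$, lookup $\sigma(x)$, update $\sigma[x\mapsto v]$. Expression evaluation $(e,\sigma)\Rightarrow_E v$ is the least relation with: $(v,\sigma)\Rightarrow_E v$; $(x,\sigma)\Rightarrow_E\sigma(x)$ if $x\in\mathrm{dom}(\sigma)$; if $(e_1,\sigma)\Rightarrow_E n_1$ and $(e_2,\sigma)\Rightarrow_E n_2$ with $n_1,n_2$ naturals then $(e_1\oplus e_2,\sigma)\Rightarrow_E\oplus(n_1,n_2)$. Small-step relation $(c,\sigma)\to(c',\sigma')$ is the least relation with: $(\mathsf{alloc}\ x,\sigma)\to(\mathsf{skip},\sigma[x\mapsto\mathsf{null}])$ if $x\notin\mathrm{dom}(\sigma)$; $(x:=e,\sigma)\to(\mathsf{skip},\sigma[x\mapsto v])$ if $x\in\mathrm{dom}(\sigma)$ and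 $(e,\sigma)\Rightarrow_E v$; $(c_1;c_2,\sigma)\to(c_1';c_2,\sigma')$ if $(c_1,\sigma)\to(c_1',\sigma')$; $(\mathsf{skip};c_2,\sigma)\to(c_2,\sigma)$; $(\mathsf{if}\ e\ c_1\ c_2,\sigma)\to(c_1,\sigma)$ if $(e,\sigma)\Rightarrow_E v$, $v\neq 0$; $(\mathsf{if}\ e\ c_1\ c_2,\sigma)\to(c_2,\sigma)$ if $(e,\sigma)\Rightarrow_E 0$; $(\mathsf{while}\ e\ c,\sigma)\to(c;\mathsf{while}\ e\ c,\sigma)$ if $(e,\sigma)\Rightarrow_E v$, $v\neq0$; $(\mathsf{while}\ e\ c,\sigma)\to(\mathsf{skip},\sigma)$ if $(e,\sigma)\Rightarrow_E 0$. The predicate $(c,\sigma)\to^\infty$ is coinductively defined (greatest predicate) by the single rule: if $(c,\sigma)\to(c',\sigma')$ and $(c',\sigma')\to^\infty$ then $(c,\sigma)\to^\infty$; i.e. it holds exactly when there is an infinite sequence of transitions from $(c,\sigma)$. Big-step relation $(c,\sigma)\Rightarrow_B\sigma'$ is the least relation with: $(\mathsf{skip},\sigma)\Rightarrow_B\sigma$; $(\mathsf{alloc}\ x,\sigma)\Rightarrow_B\sigma[x\mapsto\mathsf{null}]$ if $x\notin\mathrm{dom}(\sigma)$; $(x:=e,\sigma)\Rightarrow_B\sigma[x\mapsto v]$ if $x\in\mathrm{dom}(\sigma)$ and $(e,\sigma)\Rightarrow_E v$; $(c_1;c_2,\sigma)\Rightarrow_B\sigma''$ if $(c_1,\sigma)\Rightarrow_B\sigma'$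 and $(c_2,\sigma')\Rightarrow_B\sigma''$; $(\mathsf{if}\ e\ c_1\ c_2,\sigma)\Rightarrow_B\sigma'$ if $(e,\sigma)\Rightarrow_E v$, $v\ne0$, $(c_1,\sigma)\Rightarrow_B\sigma'$; $(\mathsf{if}\ e\ c_1\ c_2,\sigma)\Rightarrow_B\sigma'$ if $(e,\sigma)\Rightarrow_E0$, $(c_2,\sigma)\Rightarrow_B\sigma'$; $(\mathsf{while}\ e\ c,\sigma)\Rightarrow_B\sigma''$ if $(e,\sigma)\Rightarrow_E v$, $v\ne0$, $(c,\sigma)\Rightarrow_B\sigma'$, $(\mathsf{while}\ e\ c,\sigma')\Rightarrow_B\sigma''$; $(\mathsf{while}\ e\ c,\sigma)\Rightarrow_B\sigma$ if $(e,\sigma)\Rightarrow_E0$. The big-step divergence predicate $(c,\sigma)\Rightarrow^\infty$ is the greatest predicate such that every element is the conclusion of an instance of one of these rules whose $\Rightarrow^\infty$-premises are in it: (D-Seq1) $(c_1,\sigma)\Rightarrow^\infty$ gives $(c_1;c_2,\sigma)\Rightarrow^\infty$; (D-Seq2) $(c_1,\sigma)\Rightarrow_B\sigma'$ and $(c_2,\sigma')\Rightarrow^\infty$ give $(c_1;c_2,\sigma)\Rightarrow^\infty$; (D-If) $(e,\sigma)\Rightarrow_E v$, $v\ne0$, $(c_1,\sigma)\Rightarrow^\infty$ give $(\mathsf{if}\ e\ c_1\ c_2,\sigma)\Rightarrow^\infty$; (D-IfZ) $(e,\sigma)\Rightarrow_E0$, $(c_2,\sigma)\Rightarrow^\infty$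 give $(\mathsf{if}\ e\ c_1\ c_2,\sigma)\Rightarrow^\infty$; (D-WhileBody) $(e,\sigma)\Rightarrow_E v$, $v\ne0$, $(c,\sigma)\Rightarrow^\infty$ give $(\mathsf{while}\ e\ c,\sigma)\Rightarrow^\infty$; (D-While) $(e,\sigma)\Rightarrow_E v$, $v\ne0$, $(c,\sigma)\Rightarrow_B\sigma'$, $(\mathsf{while}\ e\ c,\sigma')\Rightarrow^\infty$ give $(\mathsf{while}\ e\ c,\sigma)\Rightarrow^\infty$. *)

theory Defs
  imports Main
begin

type_synonym var = string

datatype val = Null | N nat

datatype binop = Plus | Minus | Times

datatype exp = V val | X var | Op binop exp exp

datatype com = Skip | Alloc var | Assign var exp | Seq com com
  | If exp com com | While exp com

(* stores: partial maps Var -> val; "store" in the paper additionally means finite domain *)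
type_synonym store = "var \<Rightarrow> val option"

fun opsem :: "binop \<Rightarrow> nat \<Rightarrow> nat \<Rightarrow> nat" where
  "opsem Plus a b = a + b"
| "opsem Minus a b = a - b"
| "opsem Times a b = a * b"

inductive eval :: "exp \<Rightarrow> store \<Rightarrow> val \<Rightarrow> bool" where
  EVal: "eval (V v) \<sigma> v"
| EVar: "\<sigma> x = Some v \<Longrightarrow> eval (X x) \<sigma> v"
| EOp: "eval e1 \<sigma> (N n1) \<Longrightarrow> eval e2 \<sigma> (N n2) \<Longrightarrow> eval (Op f e1 e2) \<sigma> (N (opsem f n1 n2))"

inductive step :: "com \<Rightarrow> store \<Rightarrow> com \<Rightarrow> store \<Rightarrow> bool" where
  SAlloc: "x \<notin> dom \<sigma> \<Longrightarrow> step (Alloc x) \<sigma> Skip (\<sigma>(x \<mapsto> Null))"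
| SAssign: "x \<in> dom \<sigma> \<Longrightarrow> eval e \<sigma> v \<Longrightarrow> step (Assign x e) \<sigma> Skip (\<sigma>(x \<mapsto> v))"
| SSeq: "step c1 \<sigma> c1' \<sigma>' \<Longrightarrow> step (Seq c1 c2) \<sigma> (Seq c1' c2) \<sigma>'"
| SSeqSkip: "step (Seq Skip c2) \<sigma> c2 \<sigma>"
| SIf: "eval e \<sigma> v \<Longrightarrow> v \<noteq> N 0 \<Longrightarrow> step (If e c1 c2) \<sigma> c1 \<sigma>"
| SIfZ: "eval e \<sigma> (N 0) \<Longrightarrow> step (If e c1 c2) \<sigma> c2 \<sigma>"
| SWhile: "eval e \<sigma> v \<Longrightarrow> v \<noteq> N 0 \<Longrightarrow> step (While e c) \<sigma> (Seq c (While e c)) \<sigma>"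
| SWhileZ: "eval e \<sigma> (N 0) \<Longrightarrow> step (While e c) \<sigma> Skip \<sigma>"

coinductive sdiv :: "com \<Rightarrow> store \<Rightarrow> bool" where
  "step c \<sigma> c' \<sigma>' \<Longrightarrow> sdiv c' \<sigma>' \<Longrightarrow> sdiv c \<sigma>"

inductive big :: "com \<Rightarrow> store \<Rightarrow> store \<Rightarrow> bool" where
  BSkip: "big Skip \<sigma> \<sigma>"
| BAlloc: "x \<notin> dom \<sigma> \<Longrightarrow> big (Alloc x) \<sigma> (\<sigma>(x \<mapsto> Null))"
| BAssign: "x \<in> dom \<sigma> \<Longrightarrow> eval e \<sigma> v \<Longrightarrow> big (Assign x e) \<sigma> (\<sigma>(x \<mapsto> v))"
| BSeq: "big c1 \<sigma> \<sigma>' \<Longrightarrow> big c2 \<sigma>' \<sigma>'' \<Longrightarrow> big (Seq c1 c2) \<sigma> \<sigma>''"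
| BIf: "eval e \<sigma> v \<Longrightarrow> v \<noteq> N 0 \<Longrightarrow> big c1 \<sigma> \<sigma>' \<Longrightarrow> big (If e c1 c2) \<sigma> \<sigma>'"
| BIfZ: "eval e \<sigma> (N 0) \<Longrightarrow> big c2 \<sigma> \<sigma>' \<Longrightarrow> big (If e c1 c2) \<sigma> \<sigma>'"
| BWhile: "eval e \<sigma> v \<Longrightarrow> v \<noteq> N 0 \<Longrightarrow> big c \<sigma> \<sigma>' \<Longrightarrow> big (While e c) \<sigma>' \<sigma>''
           \<Longrightarrow> big (While e c) \<sigma> \<sigma>''"
| BWhileZ: "eval e \<sigma> (N 0) \<Longrightarrow> big (While e c) \<sigma> \<sigma>"

coinductive bdiv :: "com \<Rightarrow> store \<Rightarrow> bool" where
  DSeq1: "bdiv c1 \<sigma> \<Longrightarrow> bdiv (Seq c1 c2) \<sigma>"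
| DSeq2: "big c1 \<sigma> \<sigma>' \<Longrightarrow> bdiv c2 \<sigma>' \<Longrightarrow> bdiv (Seq c1 c2) \<sigma>"
| DIf: "eval e \<sigma> v \<Longrightarrow> v \<noteq> N 0 \<Longrightarrow> bdiv c1 \<sigma> \<Longrightarrow> bdiv (If e c1 c2) \<sigma>"
| DIfZ: "eval e \<sigma> (N 0) \<Longrightarrow> bdiv c2 \<sigma> \<Longrightarrow> bdiv (If e c1 c2) \<sigma>"
| DWhileBody: "eval e \<sigma> v \<Longrightarrow> v \<noteq> N 0 \<Longrightarrow> bdiv c \<sigma> \<Longrightarrow> bdiv (While e c) \<sigma>"
| DWhile: "eval e \<sigma> v \<Longrightarrow> v \<noteq> N 0 \<Longrightarrow> big c \<sigma> \<sigma>' \<Longrightarrow> bdiv (While e c) \<sigma>'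
           \<Longrightarrow> bdiv (While e c) \<sigma>"

end

theory Submission
  imports Defs
begin

text \<open>
  Small-step divergence implies big-step divergence by coinduction on the big-step predicate.
  The only nontrivial case is a diverging sequence \<open>c\<^sub>1; c\<^sub>2\<close> (and a loop, which unfolds to one):
  either the run never leaves \<open>c\<^sub>1\<close>, so \<open>c\<^sub>1\<close> diverges, or it reaches \<open>Skip; c\<^sub>2\<close> after finitely
  many steps, and those steps assemble into a big-step derivation of \<open>c\<^sub>1\<close>.
  Conversely, every configuration satisfying the big-step divergence predicate makes a step to
  another such configuration (structural induction on the command, using that a terminating
  big-step derivation of a non-\<open>Skip\<close> command starts with a small step), which by coinduction
  yields an infinite run.
\<close>

inductive steps :: "com \<Rightarrow> store \<Rightarrow> com \<Rightarrow> store \<Rightarrow> bool" where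
  steps_refl: "steps c s c s"
| steps_step: "step c s c' s' \<Longrightarrow> steps c' s' c'' s'' \<Longrightarrow> steps c s c'' s''"

lemma big_SkipD: "big Skip s t \<Longrightarrow> t = s"
  by (cases rule: big.cases) auto

lemma step_big_continue: "step c s c' s' \<Longrightarrow> big c' s' t \<Longrightarrow> big c s t"
proof (induction arbitrary: t rule: step.induct)
  case (SAlloc x \<sigma>)
  then show ?case using big.BAlloc[OF SAlloc.hyps] big_SkipD by metis
next
  case (SAssign x \<sigma> e v)
  then show ?case using big.BAssign[OF SAssign.hyps] big_SkipD by metis
next
  case (SSeq c1 \<sigma> c1' \<sigma>' c2)
  from SSeq.prems obtain u where "big c1' \<sigma>' u" "big c2 u t" by (auto elim: big.cases)
  then show ?case using SSeq.IH by (auto intro: big.intros)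
next
  case (SWhile e \<sigma> v c)
  from SWhile.prems obtain u where "big c \<sigma> u" "big (While e c) u t" by (auto elim: big.cases)
  then show ?case using SWhile.hyps by (auto intro: big.intros)
next
  case (SWhileZ e \<sigma> c)
  then show ?case by (auto elim: big.cases intro: big.intros)
qed (auto intro: big.intros)

lemma steps_Skip_big: "steps c s c' t \<Longrightarrow> c' = Skip \<Longrightarrow> big c s t"
  by (induction rule: steps.induct) (auto intro: big.intros step_big_continue)

lemma big_Skip_or_step:
  "big c s t \<Longrightarrow> (c = Skip \<and> t = s) \<or> (\<exists>c' s'. step c s c' s' \<and> big c' s' t)"
  by (induction rule: big.induct) (blast intro: step.intros big.intros)+

lemma not_sdiv_Skip: "\<not> sdiv Skip s"
  by (auto elim: sdiv.cases step.cases)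

text \<open>The coinduction invariant quantifies \<open>c\<^sub>2\<close> existentially, since it is not an argument of \<open>sdiv c\<^sub>1\<close>.\<close>
lemma sdiv_Seq_left:
  assumes "sdiv (Seq c1 c2) s" and "\<not> (\<exists>t. steps c1 s Skip t \<and> sdiv c2 t)"
  shows "sdiv c1 s"
proof -
  from assms have "\<exists>c2. sdiv (Seq c1 c2) s \<and> \<not> (\<exists>t. steps c1 s Skip t \<and> sdiv c2 t)"
    by blast
  then show ?thesis
  proof (coinduction arbitrary: c1 s rule: sdiv.coinduct)
    case (sdiv c1 s)
    then obtain c2 where div: "sdiv (Seq c1 c2) s"
      and never_Skip: "\<not> (\<exists>t. steps c1 s Skip t \<and> sdiv c2 t)" by blast
    from div obtain c' s' where st: "step (Seq c1 c2) s c' s'" and div': "sdiv c' s'"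
      by (auto elim: sdiv.cases)
    from st show ?case
    proof (cases rule: step.cases)
      case (SSeq c1')
      with never_Skip have "\<not> (\<exists>t. steps c1' s' Skip t \<and> sdiv c2 t)"
        by (auto intro: steps_step)
      with SSeq div' show ?thesis by blast
    next
      case SSeqSkip
      with never_Skip div' show ?thesis by (auto intro: steps_refl)
    qed
  qed
qed

lemma sdiv_SeqE:
  assumes "sdiv (Seq c1 c2) s"
  obtains "sdiv c1 s" | t where "big c1 s t" and "sdiv c2 t"
  using sdiv_Seq_left[OF assms] steps_Skip_big by blast

lemma sdiv_imp_bdiv: "sdiv c s \<Longrightarrow> bdiv c s"
proof (coinduction arbitrary: c s rule: bdiv.coinduct)
  case (bdiv c s)
  then obtain c' s' where st: "step c s c' s'" and div: "sdiv c' s'"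
    by (auto elim: sdiv.cases)
  show ?case
  proof (cases c)
    case (Seq c1 c2)
    with bdiv have "sdiv (Seq c1 c2) s" by simp
    then show ?thesis
    proof (cases rule: sdiv_SeqE)
      case 1
      with Seq show ?thesis by auto
    next
      case (2 t)
      with Seq show ?thesis by auto
    qed
  next
    case (While e b)
    from st[unfolded While] show ?thesis
    proof (cases rule: step.cases)
      case (SWhile v)
      with div have "sdiv (Seq b (While e b)) s" by simp
      then show ?thesis
      proof (cases rule: sdiv_SeqE)
        case 1
        with SWhile While show ?thesis by auto
      next
        case (2 t)
        with SWhile While show ?thesis by auto
      qed
    next
      case SWhileZ
      with div not_sdiv_Skip show ?thesis by simp
    qed
  qed (use st div not_sdiv_Skip in \<open>auto elim: step.cases\<close>)
qed

lemma bdiv_step: "bdiv c s \<Longrightarrow> \<exists>c' s'. step c s c' s' \<and> bdiv c' s'"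
proof (induction c arbitrary: s)
  case (Seq c1 c2)
  from Seq.prems show ?case
  proof (cases rule: bdiv.cases)
    case DSeq1
    with Seq.IH(1) show ?thesis by (blast intro: step.intros bdiv.intros)
  next
    case (DSeq2 t)
    from big_Skip_or_step[OF DSeq2(1)] DSeq2 show ?thesis
      by (blast intro: step.intros bdiv.intros)
  qed
next
  case (If e c1 c2)
  from If.prems show ?case by (cases rule: bdiv.cases) (blast intro: step.intros)+
next
  case (While e b)
  from While.prems show ?case
    by (cases rule: bdiv.cases) (blast intro: step.intros bdiv.intros)+
qed (auto elim: bdiv.cases)

lemma bdiv_imp_sdiv: "bdiv c s \<Longrightarrow> sdiv c s"
  by (coinduction arbitrary: c s rule: sdiv.coinduct) (use bdiv_step in blast)

theorem theorem5:
  fixes c :: com and \<sigma> :: store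
  assumes "finite (dom \<sigma>)"
  shows "sdiv c \<sigma> \<longleftrightarrow> bdiv c \<sigma>"
  using sdiv_imp_bdiv bdiv_imp_sdiv by blast

end
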